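(* Let $r,s,t,a,b,c$ be real numbers with $t\neq0$ and $\Delta(r,s,t)>0$, let $\alpha$ be the real root and $\omega_1,\omega_2$ the non-real roots of $x^3-rx^2-sx-t=0$, and let $M_{H,n}^{(3)}$, $M_{h,n}^{(3)}$ be the matrix sequences defined in the context. Let $n,m,l$ be nonnegative integers with $l\ge m$, put $\mu(m)=\alpha^{m}+\omega_{1}^{m}+\omega_{2}^{m}$ and $\sigma_{m}=t^{m}(1-\alpha^{-m})+(1-\alpha^{m})(\omega_{1}^{m}+\omega_{2}^{m}-1)$, and assume $\sigma_m\neq0$. Then $$\sum_{k=0}^{n}M_{H,mk+l}^{(3)}=\frac{1}{\sigma_{m}}\Big( M_{H,m(n+1)+l}^{(3)}-M_{H,l}^{(3)}+t^{m}M_{H,mn+l}^{(3)}-t^{m}M_{H,l-m}^{(3)}-\mu(m)M_{H,m(n+1)+l}^{(3)}+\mu(m)M_{H,l}^{(3)}+M_{H,m(n+2)+l}^{(3)}-M_{H,l+m}^{(3)}\Big),$$ and the same identity holds with every $M_{H,k}^{(3)}$ replaced by $M_{h,k}^{(3)}$.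
   Context: $\Delta(r,s,t)=\frac{r^{3}t}{27}-\frac{r^{2}s^{2}}{108}+\frac{rst}{6}-\frac{s^{3}}{27}+\frac{t^{2}}{4}$; when $\Delta>0$ the cubic has one real root and two non-real conjugate roots. The third-order Horadam matrix sequence is the sequence of $3\times3$ matrices defined by $M_{H,n+3}^{(3)}=rM_{H,n+2}^{(3)}+sM_{H,n+1}^{(3)}+tM_{H,n}^{(3)}$ ($n\ge0$) with $M_{H,0}^{(3)}=\begin{pmatrix} b & c-rb & ta\\ a & b-ra & c-rb-sa\\ \frac{1}{t}(c-rb-sa) & a-\frac{r}{t}(c-rb-sa) & \frac1t\big(-sc+(t+rs)b+(s^2-rt)a\big)\end{pmatrix}$, $M_{H,1}^{(3)}=\begin{pmatrix} c & sb+ta & tb\\ b & c-rb & ta\\ a & b-ra & c-rb-sa\end{pmatrix}$, $M_{H,2}^{(3)}=\begin{pmatrix} rc+sb+ta & sc+tb & tc\\ c & sb+ta & tb\\ b & c-rb & ta\end{pmatrix}$. The generalized Tribonacci matrix sequence satisfies the same recurrence with $M_{h,0}^{(3)}=I_3$, $M_{h,1}^{(3)}=\begin{pmatrix} r&s&t\\1&0&0\\0&1&0\end{pmatrix}$, $M_{h,2}^{(3)}=\begin{pmatrix} r^2+s&rs+t&rt\\ r&s&t\\ 1&0&0\end{pmatrix}$. *)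

theory Defs
  imports "HOL-Analysis.Analysis"
begin

(* Discriminant-type quantity Delta(r,s,t) of x^3 - r x^2 - s x - t *)
definition Delta :: "real \<Rightarrow> real \<Rightarrow> real \<Rightarrow> real" where
  "Delta r s t = r^3 * t / 27 - r^2 * s^2 / 108 + r * s * t / 6 - s^3 / 27 + t^2 / 4"

definition mat3 :: "'a::zero \<Rightarrow> 'a \<Rightarrow> 'a \<Rightarrow> 'a \<Rightarrow> 'a \<Rightarrow> 'a \<Rightarrow> 'a \<Rightarrow> 'a \<Rightarrow> 'a \<Rightarrow> 'a^3^3" where
  "mat3 a11 a12 a13 a21 a22 a23 a31 a32 a33 =
     vector [vector [a11, a12, a13], vector [a21, a22, a23], vector [a31, a32, a33]]"

fun mseq3 :: "real \<Rightarrow> real \<Rightarrow> real \<Rightarrow> real^3^3 \<Rightarrow> real^3^3 \<Rightarrow> real^3^3 \<Rightarrow> nat \<Rightarrow> real^3^3" where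
  "mseq3 r s t A0 A1 A2 0 = A0"
| "mseq3 r s t A0 A1 A2 (Suc 0) = A1"
| "mseq3 r s t A0 A1 A2 (Suc (Suc 0)) = A2"
| "mseq3 r s t A0 A1 A2 (Suc (Suc (Suc n))) =
     r *\<^sub>R mseq3 r s t A0 A1 A2 (Suc (Suc n)) + s *\<^sub>R mseq3 r s t A0 A1 A2 (Suc n)
     + t *\<^sub>R mseq3 r s t A0 A1 A2 n"

definition MH :: "real \<Rightarrow> real \<Rightarrow> real \<Rightarrow> real \<Rightarrow> real \<Rightarrow> real \<Rightarrow> nat \<Rightarrow> real^3^3" where
  "MH r s t a b c = mseq3 r s t
     (mat3 b (c - r*b) (t*a)
           a (b - r*a) (c - r*b - s*a)
           ((c - r*b - s*a) / t) (a - (r/t) * (c - r*b - s*a))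
             ((- (s*c) + (t + r* s) * b + (s^2 - r*t) * a) / t))
     (mat3 c (s*b + t*a) (t*b)
           b (c - r*b) (t*a)
           a (b - r*a) (c - r*b - s*a))
     (mat3 (r*c + s*b + t*a) (s*c + t*b) (t*c)
           c (s*b + t*a) (t*b)
           b (c - r*b) (t*a))"

definition Mh :: "real \<Rightarrow> real \<Rightarrow> real \<Rightarrow> nat \<Rightarrow> real^3^3" where
  "Mh r s t = mseq3 r s t
     (mat3 1 0 0  0 1 0  0 0 1)
     (mat3 r s t  1 0 0  0 1 0)
     (mat3 (r^2 + s) (r* s + t) (r*t)  r s t  1 0 0)"

end

theory Submission
  imports Defs "HOL-Computational_Algebra.Polynomial"
begin

(* Let E be the shift operator on sequences. If P(E) f = 0 for
   P(x) = (x - \<alpha>)(x - \<omega>1)(x - \<omega>2), then also Q(E) f = 0 for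
   Q(x) = (x^m - \<alpha>^m)(x^m - \<omega>1^m)(x^m - \<omega>2^m), since P divides Q.
   Hence every subsequence f(mk + c) satisfies a third-order recurrence with
   characteristic roots \<alpha>^m, \<omega>1^m, \<omega>2^m, whose elementary symmetric functions
   are \<mu>(m), e_2 and t^m (as \<alpha> \<omega>1 \<omega>2 = t). Summing that recurrence telescopes,
   leaving the sum multiplied by \<mu>(m) - e2 + t^m - 1 = \<sigma>_m. Every entry of both
   matrix sequences satisfies the original recurrence. *)

lemma diff_dvd_power_diff: "(x::'a::comm_ring_1) - y dvd x ^ n - y ^ n"
proof (induction n)
  case (Suc n)
  have "x ^ Suc n - y ^ Suc n = x * (x ^ n - y ^ n) + y ^ n * (x - y)"
    by (simp add: algebra_simps)
  with Suc show ?case by simp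
qed simp

(* apply_shift Q f is Q(E) f, where (E f) n = f (n + 1). *)
definition apply_shift :: "'a::comm_ring_1 poly \<Rightarrow> (nat \<Rightarrow> 'a) \<Rightarrow> nat \<Rightarrow> 'a" where
  "apply_shift Q f n = (\<Sum>i\<le>degree Q. coeff Q i * f (n + i))"

lemma apply_shift_eq_sum:
  "degree Q \<le> N \<Longrightarrow> apply_shift Q f n = (\<Sum>i\<le>N. coeff Q i * f (n + i))"
  unfolding apply_shift_def by (rule sum.mono_neutral_left) (auto simp: coeff_eq_0)

lemma apply_shift_0 [simp]: "apply_shift 0 f n = 0"
  by (simp add: apply_shift_def)

lemma apply_shift_add: "apply_shift (Q + R) f n = apply_shift Q f n + apply_shift R f n"
  using apply_shift_eq_sum[of "Q + R" "max (degree Q) (degree R)"]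
    apply_shift_eq_sum[of Q "max (degree Q) (degree R)"]
    apply_shift_eq_sum[of R "max (degree Q) (degree R)"]
  by (simp add: degree_add_le distrib_right sum.distrib)

lemma apply_shift_diff: "apply_shift (Q - R) f n = apply_shift Q f n - apply_shift R f n"
  using apply_shift_eq_sum[of "Q - R" "max (degree Q) (degree R)"]
    apply_shift_eq_sum[of Q "max (degree Q) (degree R)"]
    apply_shift_eq_sum[of R "max (degree Q) (degree R)"]
  by (simp add: degree_diff_le left_diff_distrib sum_subtractf)

lemma apply_shift_smult: "apply_shift (smult c Q) f n = c * apply_shift Q f n"
proof -
  have "apply_shift (smult c Q) f n = (\<Sum>i\<le>degree Q. coeff (smult c Q) i * f (n + i))"
    by (rule apply_shift_eq_sum) (rule degree_smult_le)
  then show ?thesis by (simp add: apply_shift_def sum_distrib_left mult.assoc)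
qed

lemma apply_shift_pCons: "apply_shift (pCons a Q) f n = a * f n + apply_shift Q f (Suc n)"
proof -
  have "apply_shift (pCons a Q) f n = (\<Sum>i\<le>Suc (degree Q). coeff (pCons a Q) i * f (n + i))"
    by (rule apply_shift_eq_sum) (simp add: degree_pCons_le)
  also have "\<dots> = a * f n + (\<Sum>i\<le>degree Q. coeff Q i * f (Suc n + i))"
    by (subst sum.atMost_Suc_shift) simp
  finally show ?thesis by (simp add: apply_shift_def)
qed

lemma apply_shift_mult: "apply_shift (Q * R) f n = apply_shift Q (apply_shift R f) n"
  by (induction Q arbitrary: n) (simp_all add: apply_shift_add apply_shift_smult apply_shift_pCons)

lemma apply_shift_monom: "apply_shift (monom c k) f n = c * f (n + k)"
proof -
  have "apply_shift (monom c k) f n = (\<Sum>i\<le>k. coeff (monom c k) i * f (n + i))"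
    by (rule apply_shift_eq_sum) (simp add: degree_monom_le)
  also have "\<dots> = (\<Sum>i\<in>{k}. coeff (monom c k) i * f (n + i))"
    by (rule sum.mono_neutral_right) auto
  finally show ?thesis by simp
qed

definition third_order_rec :: "'a::comm_ring_1 \<Rightarrow> 'a \<Rightarrow> 'a \<Rightarrow> (nat \<Rightarrow> 'a) \<Rightarrow> bool" where
  "third_order_rec p q u f \<longleftrightarrow> (\<forall>n. f (n + 3) = p * f (n + 2) + q * f (n + 1) + u * f n)"

lemma third_order_recD:
  "third_order_rec p q u f \<Longrightarrow> f (n + 3) = p * f (n + 2) + q * f (n + 1) + u * f n"
  by (simp add: third_order_rec_def)

lemma apply_shift_char_poly:
  "third_order_rec p q u f \<Longrightarrow> apply_shift [:-u, -q, -p, 1:] f = (\<lambda>_. 0)"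
  unfolding third_order_rec_def
  by (simp add: fun_eq_iff apply_shift_pCons algebra_simps eval_nat_numeral)

lemma apply_shift_power_roots:
  fixes f :: "nat \<Rightarrow> 'a::comm_ring_1"
  assumes rec: "third_order_rec r s t f"
    and roots: "[:-t, -s, -r, 1:] = [:-a, 1:] * [:-w1, 1:] * [:-w2, 1:]"
  shows "apply_shift ((monom 1 m - [:a^m:]) * (monom 1 m - [:w1^m:]) * (monom 1 m - [:w2^m:])) f n
    = 0"
proof -
  have "[:-x, 1:] dvd monom 1 m - [:x^m:]" for x :: 'a
    using diff_dvd_power_diff[of "[:0, 1:]" "[:x:]" m] by (simp add: monom_altdef poly_const_pow)
  then have "[:-t, -s, -r, 1:]
      dvd (monom 1 m - [:a^m:]) * (monom 1 m - [:w1^m:]) * (monom 1 m - [:w2^m:])"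
    unfolding roots by (intro mult_dvd_mono)
  then obtain R where R: "(monom 1 m - [:a^m:]) * (monom 1 m - [:w1^m:]) * (monom 1 m - [:w2^m:])
      = R * [:-t, -s, -r, 1:]"
    by (auto simp: mult.commute)
  show ?thesis
    unfolding R apply_shift_mult apply_shift_char_poly[OF rec] by (simp add: apply_shift_def)
qed

lemma third_order_rec_stride:
  fixes f :: "nat \<Rightarrow> 'a::comm_ring_1"
  assumes rec: "third_order_rec r s t f"
    and roots: "[:-t, -s, -r, 1:] = [:-a, 1:] * [:-w1, 1:] * [:-w2, 1:]"
  shows "third_order_rec (a^m + w1^m + w2^m) (- (a^m * w1^m + w1^m * w2^m + w2^m * a^m))
           (a^m * w1^m * w2^m) (\<lambda>k. f (m * k + c))"
proof -
  have cubic: "(y - A) * (y - B) * (y - C)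
      = y^3 - (A + B + C) * y^2 + (A * B + B * C + C * A) * y - A * B * C" for y A B C :: "'a poly"
    by (simp add: algebra_simps power2_eq_square power3_eq_cube)
  let ?Q = "(monom 1 m - [:a^m:]) * (monom 1 m - [:w1^m:]) * (monom 1 m - [:w2^m:])"
  have "?Q = monom 1 m ^ 3 - [:a^m + w1^m + w2^m:] * monom 1 m ^ 2
      + [:a^m * w1^m + w1^m * w2^m + w2^m * a^m:] * monom 1 m - [:a^m * w1^m * w2^m:]"
    unfolding cubic by (simp add: mult_ac)
  then have Q_expanded: "apply_shift ?Q f n = f (n + 3 * m) - (a^m + w1^m + w2^m) * f (n + 2 * m)
      + (a^m * w1^m + w1^m * w2^m + w2^m * a^m) * f (n + m) - a^m * w1^m * w2^m * f n" for n
    by (simp add: monom_power apply_shift_add apply_shift_diff apply_shift_smult apply_shift_monom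
        apply_shift_pCons mult.commute)
  have stride: "f (n + 3 * m) = (a^m + w1^m + w2^m) * f (n + 2 * m)
      + - (a^m * w1^m + w1^m * w2^m + w2^m * a^m) * f (n + m) + a^m * w1^m * w2^m * f n" for n
    using trans[OF Q_expanded[of n, symmetric] apply_shift_power_roots[OF rec roots]]
    by (simp add: algebra_simps)
  have "m * (k + 3) + c = (m * k + c) + 3 * m" "m * (k + 2) + c = (m * k + c) + 2 * m"
    "m * (k + 1) + c = (m * k + c) + m" for k
    by (simp_all add: algebra_simps)
  then show ?thesis
    unfolding third_order_rec_def by (simp only: stride simp_thms)
qed

lemma third_order_rec_sum:
  assumes rec: "third_order_rec p q u h"
  shows "(\<Sum>k=0..n. h (k + 1)) * (p + q + u - 1) =
     h (n + 2) - h 1 + u * h (n + 1) - u * h 0 - p * h (n + 2) + p * h 1 + h (n + 3) - h 2"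
proof (induction n)
  case 0
  show ?case using third_order_recD[OF rec, of 0] by (simp add: algebra_simps eval_nat_numeral)
next
  case (Suc n)
  have "(\<Sum>k=0..Suc n. h (k + 1)) * (p + q + u - 1)
      = (\<Sum>k=0..n. h (k + 1)) * (p + q + u - 1) + h (n + 2) * (p + q + u - 1)"
    by (simp add: algebra_simps)
  also have "\<dots> = h (Suc n + 2) - h 1 + u * h (Suc n + 1) - u * h 0 - p * h (Suc n + 2) + p * h 1
      + h (Suc n + 3) - h 2"
    unfolding Suc using third_order_recD[OF rec, of "Suc n"]
    by (simp add: algebra_simps eval_nat_numeral)
  finally show ?case .
qed

lemma third_order_rec_stride_sum:
  fixes f :: "nat \<Rightarrow> 'a::field"
  assumes rec: "third_order_rec r s t f"
    and roots: "[:-t, -s, -r, 1:] = [:-a, 1:] * [:-w1, 1:] * [:-w2, 1:]"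
    and "a \<noteq> 0" and "m \<le> l"
    and sigma: "t ^ m * (1 - 1 / a ^ m) + (1 - a ^ m) * (w1 ^ m + w2 ^ m - 1) \<noteq> 0"
  shows "(\<Sum>k=0..n. f (m * k + l))
    = (1 / (t ^ m * (1 - 1 / a ^ m) + (1 - a ^ m) * (w1 ^ m + w2 ^ m - 1)))
      * (f (m * (n + 1) + l) - f l + t ^ m * f (m * n + l) - t ^ m * f (l - m)
         - (a ^ m + w1 ^ m + w2 ^ m) * f (m * (n + 1) + l) + (a ^ m + w1 ^ m + w2 ^ m) * f l
         + f (m * (n + 2) + l) - f (l + m))"
proof -
  define e1 where "e1 = a^m + w1^m + w2^m"
  define e2 where "e2 = a^m * w1^m + w1^m * w2^m + w2^m * a^m"
  have "poly [:-t, -s, -r, 1:] 0 = poly ([:-a, 1:] * [:-w1, 1:] * [:-w2, 1:]) 0"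
    by (simp only: roots)
  then have "t = a * w1 * w2" by simp
  then have t_pow: "t ^ m = a^m * w1^m * w2^m"
    by (simp add: power_mult_distrib)
  define h where "h k = f (m * k + (l - m))" for k
  have "third_order_rec e1 (- e2) (t ^ m) h"
    unfolding e1_def e2_def t_pow h_def by (rule third_order_rec_stride[OF rec roots])
  then have "(\<Sum>k=0..n. h (k + 1)) * (e1 - e2 + t ^ m - 1) =
     h (n + 2) - h 1 + t ^ m * h (n + 1) - t ^ m * h 0 - e1 * h (n + 2) + e1 * h 1 + h (n + 3) - h 2"
    using third_order_rec_sum by fastforce
  moreover have "e1 - e2 + t ^ m - 1 = t ^ m * (1 - 1 / a ^ m) + (1 - a ^ m) * (w1 ^ m + w2 ^ m - 1)"
    using \<open>a \<noteq> 0\<close> by (simp add: e1_def e2_def t_pow field_simps)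
  moreover have "h (k + 1) = f (m * k + l)" for k
    using \<open>m \<le> l\<close> by (simp add: h_def algebra_simps)
  moreover have "h 0 = f (l - m)"
    by (simp add: h_def)
  ultimately have "(\<Sum>k=0..n. f (m * k + l))
      * (t ^ m * (1 - 1 / a ^ m) + (1 - a ^ m) * (w1 ^ m + w2 ^ m - 1))
    = f (m * (n + 1) + l) - f l + t ^ m * f (m * n + l) - t ^ m * f (l - m)
      - e1 * f (m * (n + 1) + l) + e1 * f l + f (m * (n + 2) + l) - f (l + m)"
    by (simp add: eval_nat_numeral add.commute)
  with sigma show ?thesis
    unfolding e1_def by (simp add: field_simps)
qed

lemma third_order_rec_of_real:
  "third_order_rec p q u f \<Longrightarrow>
    third_order_rec (of_real p) (of_real q) (of_real u) (\<lambda>n. (of_real (f n) :: 'a::real_field))"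
  by (simp add: third_order_rec_def)

lemma third_order_rec_mseq3_entry:
  "third_order_rec r s t (\<lambda>n. mseq3 r s t A0 A1 A2 n $ i $ j)"
  by (simp add: third_order_rec_def eval_nat_numeral)

theorem theorem2p5:
  fixes r s t a b c :: real and \<alpha> :: real and \<omega>1 \<omega>2 :: complex and n m l :: nat
  assumes ht: "t \<noteq> 0"
    and hDelta: "Delta r s t > 0"
    and hroots: "\<And>x::complex. x^3 - of_real r * x^2 - of_real s * x - of_real t
                   = (x - of_real \<alpha>) * (x - \<omega>1) * (x - \<omega>2)"
    and hw1: "Im \<omega>1 \<noteq> 0" and hw2: "Im \<omega>2 \<noteq> 0"
    and hlm: "l \<ge> m"
    and hsig: "complex_of_real t ^ m * (1 - 1 / complex_of_real \<alpha> ^ m)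
               + (1 - complex_of_real \<alpha> ^ m) * (\<omega>1 ^ m + \<omega>2 ^ m - 1) \<noteq> 0"
  shows "let \<mu> = complex_of_real \<alpha> ^ m + \<omega>1 ^ m + \<omega>2 ^ m;
             \<sigma> = complex_of_real t ^ m * (1 - 1 / complex_of_real \<alpha> ^ m)
                 + (1 - complex_of_real \<alpha> ^ m) * (\<omega>1 ^ m + \<omega>2 ^ m - 1)
         in (\<forall>i j. complex_of_real ((\<Sum>k=0..n. MH r s t a b c (m*k + l)) $ i $ j)
               = (1 / \<sigma>) * ( of_real (MH r s t a b c (m*(n+1) + l) $ i $ j)
                               - of_real (MH r s t a b c l $ i $ j)
                               + of_real t ^ m * of_real (MH r s t a b c (m*n + l) $ i $ j)
                               - of_real t ^ m * of_real (MH r s t a b c (l - m) $ i $ j)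
                               - \<mu> * of_real (MH r s t a b c (m*(n+1) + l) $ i $ j)
                               + \<mu> * of_real (MH r s t a b c l $ i $ j)
                               + of_real (MH r s t a b c (m*(n+2) + l) $ i $ j)
                               - of_real (MH r s t a b c (l + m) $ i $ j)))
          \<and> (\<forall>i j. complex_of_real ((\<Sum>k=0..n. Mh r s t (m*k + l)) $ i $ j)
               = (1 / \<sigma>) * ( of_real (Mh r s t (m*(n+1) + l) $ i $ j)
                               - of_real (Mh r s t l $ i $ j)
                               + of_real t ^ m * of_real (Mh r s t (m*n + l) $ i $ j)
                               - of_real t ^ m * of_real (Mh r s t (l - m) $ i $ j)
                               - \<mu> * of_real (Mh r s t (m*(n+1) + l) $ i $ j)
                               + \<mu> * of_real (Mh r s t l $ i $ j)
                               + of_real (Mh r s t (m*(n+2) + l) $ i $ j)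
                               - of_real (Mh r s t (l + m) $ i $ j)))"
proof -
  have "poly [:-of_real t, -of_real s, -of_real r, 1:] x
      = poly ([:-of_real \<alpha>, 1:] * [:-\<omega>1, 1:] * [:-\<omega>2, 1:]) x" for x
    using hroots[of x] by (simp add: algebra_simps power2_eq_square power3_eq_cube)
  then have roots: "[:-of_real t, -of_real s, -of_real r, 1:]
      = [:-of_real \<alpha>, 1:] * [:-\<omega>1, 1:] * [:-\<omega>2, 1:]"
    using poly_eq_poly_eq_iff by blast
  have "complex_of_real \<alpha> \<noteq> 0"
    using hroots[of 0] ht by auto
  note stride_sum = third_order_rec_stride_sum
    [OF third_order_rec_of_real[OF third_order_rec_mseq3_entry] roots this hlm hsig]
  show ?thesis
    unfolding Let_def MH_def Mh_def by (simp add: stride_sum)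
qed

end
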